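(* Let $n\ge3$ and suppose $T=T_\lambda(r,m)$ acts linearly and inner faithfully on $\Bbbk\overline{Q}$ so that $g$ acts by a rotation: $g\cdot e_i=e_{i+d}$, $g\cdot a_i=\mu_ia_{i+d}$, $g\cdot a_i^*=\mu_i^*a^*_{i+d}$ for some integer $0<d\le n-1$ and $\mu_i,\mu_i^*\in\Bbbk^\times$. Let $\sigma$ be the quiver-Taft map of the action. If $n\ne4$ or $d\ne2$, then $\sigma^r(a)=0$ for every arrow $a$ of $\overline{Q}$.
   Context: Let $\Bbbk$ be a field, $r>1$ and $m$ positive integers with $r\mid m$, and $\lambda\in\Bbbk$ a primitive $r$-th root of unity, with $r$ coprime to the characteristic of $\Bbbk$. The generalized Taft algebra $T=T_\lambda(r,m)$ is the Hopf algebra generated by $g,x$ with relations $gx=\lambda xg$, $g^m=1$, $x^r=0$, $\Delta(g)=g\otimes g$, $\Delta(x)=1\otimes x+x\otimes g$, $\varepsilon(g)=1,\varepsilon(x)=0$, $S(g)=g^{-1}$, $S(x)=-xg^{-1}$. An action of $T$ on an algebra $A$ is a $T$-module algebra structure; so $g$ acts by an algebra automorphism and $x\cdot(ab)=a(x\cdot b)+(x\cdot a)(g\cdot b)$. It is inner faithful if no nonzero Hopf ideal $I$ of $T$ satisfies $I\cdot A=0$. Vertex indices are taken modulo $n$. $\overline{Q}$ has vertices $0,\dots,n-1$ and arrows $a_i:i\to i+1$, $a_i^*:i+1\to i$; in $\Bbbk\overline{Q}$, $e_i$ is the trivial path at $i$, $s(a),t(a)$ source and target, and $pq$ is concatenation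 ($p$ then $q$) if $t(p)=s(q)$, else $0$. A linear action: $g$ acts by a path-length-preserving automorphism ($g\cdot e_i=e_{g\cdot i}$) and $x$ maps vertices into the span of vertices and arrows into the span of vertices and arrows. Then there are scalars $\gamma_i$ with $x\cdot e_i=\gamma_ie_i-\gamma_i\lambda^{-1}e_{g\cdot i}$; the quiver-Taft map $\sigma$ is the linear map on the span of vertices and arrows with $\sigma(e_i)=0$ and $\sigma(a)=x\cdot a-\gamma_{t(a)}a+\gamma_{s(a)}\lambda^{-1}(g\cdot a)$ for arrows $a$; $\sigma^r$ is its $r$-fold iterate. *)

theory Defs
  imports Main "HOL-Library.Function_Algebras"
begin

text \<open>Vertices 0..n-1 (indices mod n). Arrow Ar i is a_i : i -> i+1,
  arrow As i is a_i^* : i+1 -> i (valid when i < n).\<close>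

datatype arr = Ar nat | As nat

fun aidx :: "arr \<Rightarrow> nat" where
  "aidx (Ar i) = i" | "aidx (As i) = i"

fun asrc :: "nat \<Rightarrow> arr \<Rightarrow> nat" where
  "asrc n (Ar i) = i" | "asrc n (As i) = Suc i mod n"

fun atgt :: "nat \<Rightarrow> arr \<Rightarrow> nat" where
  "atgt n (Ar i) = Suc i mod n" | "atgt n (As i) = i"

datatype path = Triv nat | Arrs "arr list"

fun valid_path :: "nat \<Rightarrow> path \<Rightarrow> bool" where
  "valid_path n (Triv i) = (i < n)"
| "valid_path n (Arrs l) = (l \<noteq> [] \<and> (\<forall>a\<in>set l. aidx a < n) \<and>
      (\<forall>k. Suc k < length l \<longrightarrow> atgt n (l ! k) = asrc n (l ! Suc k)))"

fun psrc :: "nat \<Rightarrow> path \<Rightarrow> nat" where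
  "psrc n (Triv i) = i" | "psrc n (Arrs l) = asrc n (hd l)"

fun ptgt :: "nat \<Rightarrow> path \<Rightarrow> nat" where
  "ptgt n (Triv i) = i" | "ptgt n (Arrs l) = atgt n (last l)"

fun plen :: "path \<Rightarrow> nat" where
  "plen (Triv i) = 0" | "plen (Arrs l) = length l"

definition pcat :: "nat \<Rightarrow> path \<Rightarrow> path \<Rightarrow> path option" where
  "pcat n p q = (if ptgt n p = psrc n q then
      Some (case p of Triv _ \<Rightarrow> q
                    | Arrs l \<Rightarrow> (case q of Triv _ \<Rightarrow> p | Arrs l' \<Rightarrow> Arrs (l @ l')))
    else None)"

definition Aset :: "nat \<Rightarrow> (path \<Rightarrow> 'k::field) set" where
  "Aset n = {f. finite {p. f p \<noteq> 0} \<and> (\<forall>p. f p \<noteq> 0 \<longrightarrow> valid_path n p)}"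

definition amul :: "nat \<Rightarrow> (path \<Rightarrow> 'k::field) \<Rightarrow> (path \<Rightarrow> 'k) \<Rightarrow> path \<Rightarrow> 'k" where
  "amul n f h = (\<lambda>p. \<Sum>p1\<in>{q. f q \<noteq> 0}. \<Sum>p2\<in>{q. h q \<noteq> 0}.
       if pcat n p1 p2 = Some p then f p1 * h p2 else 0)"

definition aone :: "nat \<Rightarrow> path \<Rightarrow> 'k::field" where
  "aone n = (\<lambda>p. case p of Triv i \<Rightarrow> (if i < n then 1 else 0) | Arrs _ \<Rightarrow> 0)"

definition sing :: "path \<Rightarrow> path \<Rightarrow> 'k::field" where
  "sing p = (\<lambda>q. if q = p then 1 else 0)"

definition vtx :: "nat \<Rightarrow> path \<Rightarrow> 'k::field" where
  "vtx i = sing (Triv i)"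

definition arrow :: "arr \<Rightarrow> path \<Rightarrow> 'k::field" where
  "arrow a = sing (Arrs [a])"

text \<open>Elements are coefficient functions on the basis g^i x^j (i < m, j < r).\<close>
definition TB :: "nat \<Rightarrow> nat \<Rightarrow> (nat \<times> nat) set" where
  "TB m r = {..<m} \<times> {..<r}"

definition Tset :: "nat \<Rightarrow> nat \<Rightarrow> (nat \<times> nat \<Rightarrow> 'k::field) set" where
  "Tset m r = {t. \<forall>u. u \<notin> TB m r \<longrightarrow> t u = 0}"

text \<open>Structure constants: (g^i x^j)(g^k x^l) = lam^(-jk) g^(i+k) x^(j+l), using x g = lam^-1 g x.\<close>
definition scoef :: "nat \<Rightarrow> nat \<Rightarrow> 'k::field \<Rightarrow> nat \<times> nat \<Rightarrow> nat \<times> nat \<Rightarrow> nat \<times> nat \<Rightarrow> 'k" where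
  "scoef m r lam u v w =
     (if (fst u + fst v) mod m = fst w \<and> snd u + snd v = snd w \<and> snd w < r
      then (inverse lam) ^ (snd u * fst v) else 0)"

definition tmul :: "nat \<Rightarrow> nat \<Rightarrow> 'k::field \<Rightarrow> (nat \<times> nat \<Rightarrow> 'k) \<Rightarrow> (nat \<times> nat \<Rightarrow> 'k) \<Rightarrow> nat \<times> nat \<Rightarrow> 'k" where
  "tmul m r lam a b = (\<lambda>w. \<Sum>u\<in>TB m r. \<Sum>v\<in>TB m r. a u * b v * scoef m r lam u v w)"

definition tbasis :: "nat \<times> nat \<Rightarrow> nat \<times> nat \<Rightarrow> 'k::field" where
  "tbasis u = (\<lambda>w. if w = u then 1 else 0)"

definition tpow :: "nat \<Rightarrow> nat \<Rightarrow> 'k::field \<Rightarrow> (nat \<times> nat \<Rightarrow> 'k) \<Rightarrow> nat \<Rightarrow> nat \<times> nat \<Rightarrow> 'k" where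
  "tpow m r lam a k = (tmul m r lam a ^^ k) (tbasis (0,0))"

text \<open>T (x) T: coefficient functions on pairs of basis elements.\<close>
definition tens :: "(nat \<times> nat \<Rightarrow> 'k::field) \<Rightarrow> (nat \<times> nat \<Rightarrow> 'k) \<Rightarrow> (nat \<times> nat) \<times> (nat \<times> nat) \<Rightarrow> 'k" where
  "tens a b = (\<lambda>w. a (fst w) * b (snd w))"

definition ttmul :: "nat \<Rightarrow> nat \<Rightarrow> 'k::field \<Rightarrow> ((nat \<times> nat) \<times> (nat \<times> nat) \<Rightarrow> 'k)
     \<Rightarrow> ((nat \<times> nat) \<times> (nat \<times> nat) \<Rightarrow> 'k) \<Rightarrow> (nat \<times> nat) \<times> (nat \<times> nat) \<Rightarrow> 'k" where
  "ttmul m r lam a b = (\<lambda>w. \<Sum>u\<in>TB m r \<times> TB m r. \<Sum>v\<in>TB m r \<times> TB m r.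
      a u * b v * scoef m r lam (fst u) (fst v) (fst w) * scoef m r lam (snd u) (snd v) (snd w))"

definition ttpow :: "nat \<Rightarrow> nat \<Rightarrow> 'k::field \<Rightarrow> ((nat \<times> nat) \<times> (nat \<times> nat) \<Rightarrow> 'k) \<Rightarrow> nat
     \<Rightarrow> (nat \<times> nat) \<times> (nat \<times> nat) \<Rightarrow> 'k" where
  "ttpow m r lam a k = (ttmul m r lam a ^^ k) (tens (tbasis (0,0)) (tbasis (0,0)))"

text \<open>Delta(g) = g (x) g, Delta(x) = 1 (x) x + x (x) g, extended multiplicatively.\<close>
definition tdelta :: "nat \<Rightarrow> nat \<Rightarrow> 'k::field \<Rightarrow> (nat \<times> nat \<Rightarrow> 'k) \<Rightarrow> (nat \<times> nat) \<times> (nat \<times> nat) \<Rightarrow> 'k" where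
  "tdelta m r lam t = (\<lambda>w. \<Sum>u\<in>TB m r. t u *
      ttmul m r lam
        (ttpow m r lam (tens (tbasis (1,0)) (tbasis (1,0))) (fst u))
        (ttpow m r lam (\<lambda>z. tens (tbasis (0,0)) (tbasis (0,1)) z + tens (tbasis (0,1)) (tbasis (1,0)) z) (snd u))
        w)"

text \<open>epsilon(g) = 1, epsilon(x) = 0.\<close>
definition teps :: "nat \<Rightarrow> (nat \<times> nat \<Rightarrow> 'k::field) \<Rightarrow> 'k" where
  "teps m t = (\<Sum>i<m. t (i, 0))"

text \<open>S(g) = g^-1 = g^(m-1), S(x) = - x g^-1, S an anti-homomorphism:
  S(g^i x^j) = S(x)^j S(g)^i.\<close>
definition tanti :: "nat \<Rightarrow> nat \<Rightarrow> 'k::field \<Rightarrow> (nat \<times> nat \<Rightarrow> 'k) \<Rightarrow> nat \<times> nat \<Rightarrow> 'k" where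
  "tanti m r lam t = (\<lambda>w. \<Sum>u\<in>TB m r. t u *
      tmul m r lam
        (tpow m r lam (\<lambda>z. - tmul m r lam (tbasis (0,1)) (tbasis (m - 1, 0)) z) (snd u))
        (tpow m r lam (tbasis (m - 1, 0)) (fst u))
        w)"

definition hopf_ideal :: "nat \<Rightarrow> nat \<Rightarrow> 'k::field \<Rightarrow> (nat \<times> nat \<Rightarrow> 'k) set \<Rightarrow> bool" where
  "hopf_ideal m r lam I \<longleftrightarrow>
     I \<subseteq> Tset m r \<and> 0 \<in> I \<and>
     (\<forall>a\<in>I. \<forall>b\<in>I. a + b \<in> I) \<and>
     (\<forall>c. \<forall>a\<in>I. (\<lambda>w. c * a w) \<in> I) \<and>
     (\<forall>a\<in>I. \<forall>b\<in>Tset m r. tmul m r lam a b \<in> I \<and> tmul m r lam b a \<in> I) \<and>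
     (\<forall>a\<in>I. \<exists>ps. (\<forall>(u,v)\<in>set ps. u \<in> Tset m r \<and> v \<in> Tset m r \<and> (u \<in> I \<or> v \<in> I)) \<and>
                  tdelta m r lam a = sum_list (map (\<lambda>(u,v). tens u v) ps)) \<and>
     (\<forall>a\<in>I. teps m a = 0) \<and>
     (\<forall>a\<in>I. tanti m r lam a \<in> I)"

definition module_algebra :: "nat \<Rightarrow> nat \<Rightarrow> nat \<Rightarrow> 'k::field
     \<Rightarrow> ((nat \<times> nat \<Rightarrow> 'k) \<Rightarrow> (path \<Rightarrow> 'k) \<Rightarrow> (path \<Rightarrow> 'k)) \<Rightarrow> bool" where
  "module_algebra n m r lam \<rho> \<longleftrightarrow>
     (\<forall>t\<in>Tset m r. \<forall>a\<in>Aset n. \<rho> t a \<in> Aset n) \<and>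
     (\<forall>t\<in>Tset m r. \<forall>s\<in>Tset m r. \<forall>a\<in>Aset n. \<rho> (t + s) a = \<rho> t a + \<rho> s a) \<and>
     (\<forall>c. \<forall>t\<in>Tset m r. \<forall>a\<in>Aset n. \<rho> (\<lambda>w. c * t w) a = (\<lambda>p. c * \<rho> t a p)) \<and>
     (\<forall>t\<in>Tset m r. \<forall>a\<in>Aset n. \<forall>b\<in>Aset n. \<rho> t (a + b) = \<rho> t a + \<rho> t b) \<and>
     (\<forall>c. \<forall>t\<in>Tset m r. \<forall>a\<in>Aset n. \<rho> t (\<lambda>p. c * a p) = (\<lambda>p. c * \<rho> t a p)) \<and>
     (\<forall>t\<in>Tset m r. \<forall>s\<in>Tset m r. \<forall>a\<in>Aset n. \<rho> (tmul m r lam t s) a = \<rho> t (\<rho> s a)) \<and>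
     (\<forall>a\<in>Aset n. \<rho> (tbasis (0,0)) a = a) \<and>
     (\<forall>h\<in>Tset m r. \<forall>a\<in>Aset n. \<forall>b\<in>Aset n.
        \<rho> h (amul n a b) = (\<lambda>p. \<Sum>u\<in>TB m r \<times> TB m r.
            tdelta m r lam h u * amul n (\<rho> (tbasis (fst u)) a) (\<rho> (tbasis (snd u)) b) p)) \<and>
     (\<forall>h\<in>Tset m r. \<rho> h (aone n) = (\<lambda>p. teps m h * aone n p))"

definition inner_faithful :: "nat \<Rightarrow> nat \<Rightarrow> nat \<Rightarrow> 'k::field
     \<Rightarrow> ((nat \<times> nat \<Rightarrow> 'k) \<Rightarrow> (path \<Rightarrow> 'k) \<Rightarrow> (path \<Rightarrow> 'k)) \<Rightarrow> bool" where
  "inner_faithful n m r lam \<rho> \<longleftrightarrow>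
     \<not> (\<exists>I. hopf_ideal m r lam I \<and> (\<exists>t\<in>I. t \<noteq> 0) \<and> (\<forall>t\<in>I. \<forall>a\<in>Aset n. \<rho> t a = 0))"

abbreviation gact where "gact \<rho> \<equiv> \<rho> (tbasis (1,0))"
abbreviation xact where "xact \<rho> \<equiv> \<rho> (tbasis (0,1))"

definition linear_action :: "nat \<Rightarrow> ((nat \<times> nat \<Rightarrow> 'k::field) \<Rightarrow> (path \<Rightarrow> 'k) \<Rightarrow> (path \<Rightarrow> 'k)) \<Rightarrow> bool" where
  "linear_action n \<rho> \<longleftrightarrow>
     bij_betw (gact \<rho>) (Aset n) (Aset n) \<and>
     (\<forall>p. valid_path n p \<longrightarrow> (\<forall>q. gact \<rho> (sing p) q \<noteq> 0 \<longrightarrow> plen q = plen p)) \<and>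
     (\<forall>i<n. \<exists>j<n. gact \<rho> (vtx i) = vtx j) \<and>
     (\<forall>i<n. \<forall>q. xact \<rho> (vtx i) q \<noteq> 0 \<longrightarrow> plen q = 0) \<and>
     (\<forall>a. aidx a < n \<longrightarrow> (\<forall>q. xact \<rho> (arrow a) q \<noteq> 0 \<longrightarrow> plen q \<le> 1))"

text \<open>Quiver-Taft map, on the span of vertices and arrows: sigma(e_i) = 0 and
  sigma(a) = x.a - gamma_t(a) a + gamma_s(a) lam^-1 (g.a).\<close>
definition sigma_arr :: "nat \<Rightarrow> 'k::field \<Rightarrow> (nat \<Rightarrow> 'k)
     \<Rightarrow> ((nat \<times> nat \<Rightarrow> 'k) \<Rightarrow> (path \<Rightarrow> 'k) \<Rightarrow> (path \<Rightarrow> 'k)) \<Rightarrow> arr \<Rightarrow> path \<Rightarrow> 'k" where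
  "sigma_arr n lam \<gamma> \<rho> a = (\<lambda>p. xact \<rho> (arrow a) p - \<gamma> (atgt n a) * arrow a p
                                 + \<gamma> (asrc n a) * inverse lam * gact \<rho> (arrow a) p)"

definition quiver_taft :: "nat \<Rightarrow> 'k::field \<Rightarrow> (nat \<Rightarrow> 'k)
     \<Rightarrow> ((nat \<times> nat \<Rightarrow> 'k) \<Rightarrow> (path \<Rightarrow> 'k) \<Rightarrow> (path \<Rightarrow> 'k)) \<Rightarrow> (path \<Rightarrow> 'k) \<Rightarrow> path \<Rightarrow> 'k" where
  "quiver_taft n lam \<gamma> \<rho> f = (\<lambda>p. \<Sum>i<n.
       f (Arrs [Ar i]) * sigma_arr n lam \<gamma> \<rho> (Ar i) p
     + f (Arrs [As i]) * sigma_arr n lam \<gamma> \<rho> (As i) p)"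

end

(* The Leibniz rule x.(pq) = p(x.q) + (x.p)(g.q), applied to a = e_s a and to a = a e_t for an
   arrow a : s -> t, shows that sigma(a) lives on paths of length at most one from s to t + d.
   If sigma(a) has no arrow term, sigma^2(a) = 0. Otherwise sigma(a) = k b for the unique arrow
   b : s -> t + d (arrows are not loops and n >= 3), and an arrow term c of sigma(b) would be a third
   arrow out of s with target t + 2d. Targets of arrows out of s lie at s + 1 or s - 1, so both
   rotations t(a) -> t(b) -> t(c) by d must flip the sign: d = 2 = -2 mod n, i.e. n = 4 and d = 2.
   Hence sigma^3(a) = 0, which settles r >= 3. For r = 2 we have x^2 = 0 in T, and evaluating
   x.(x.a) = 0 at the vertex term of sigma(b) shows that this term vanishes as well. *)

theory Submission
  imports Defs "HOL-Number_Theory.Cong"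
begin

(* Keeps the indices (0,1) and (1,0) of tbasis literal, so that facts about xact and gact
   still match after simplification. *)
declare One_nat_def [simp del]

section \<open>The generalized Taft algebra\<close>

lemma finite_TB[simp]: "finite (TB m r)" by (simp add: TB_def)

lemma scoef_unit_right:
  "u \<in> TB m r \<Longrightarrow> scoef m r lam u (0,0) w = of_bool (w = u)"
  by (cases u; cases w) (auto simp: scoef_def TB_def)

lemma scoef_unit_left:
  "u \<in> TB m r \<Longrightarrow> scoef m r lam (0,0) u w = of_bool (w = u)"
  by (cases u; cases w) (auto simp: scoef_def TB_def)

lemma tens_tbasis: "tens (tbasis u) (tbasis v) z = (if z = (u, v) then 1 else 0)"
  by (cases z) (simp add: tens_def tbasis_def)

lemma sum_tens_unit:
  assumes "(0,0) \<in> TB m r"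
  shows "(\<Sum>v\<in>TB m r \<times> TB m r. tens (tbasis (0,0)) (tbasis (0,0)) v * f v) = f ((0,0),(0,0))"
proof -
  have "(\<Sum>v\<in>TB m r \<times> TB m r. tens (tbasis (0,0)) (tbasis (0,0)) v * f v)
      = (\<Sum>v\<in>TB m r \<times> TB m r. if v = ((0,0),(0,0)) then f v else 0)"
    by (intro sum.cong) (auto simp: tens_def tbasis_def)
  then show ?thesis using assms by simp
qed

lemma ttmul_unit_right:
  assumes "(0,0) \<in> TB m r"
  shows "ttmul m r lam X (tens (tbasis (0,0)) (tbasis (0,0))) w
        = (if w \<in> TB m r \<times> TB m r then X w else 0)"
proof -
  have "ttmul m r lam X (tens (tbasis (0,0)) (tbasis (0,0))) w = (\<Sum>u\<in>TB m r \<times> TB m r.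
      \<Sum>v\<in>TB m r \<times> TB m r. tens (tbasis (0,0)) (tbasis (0,0)) v *
        (X u * scoef m r lam (fst u) (fst v) (fst w) * scoef m r lam (snd u) (snd v) (snd w)))"
    unfolding ttmul_def by (simp add: ac_simps)
  also have "\<dots> = (\<Sum>u\<in>TB m r \<times> TB m r.
      X u * scoef m r lam (fst u) (0,0) (fst w) * scoef m r lam (snd u) (0,0) (snd w))"
    by (simp only: sum_tens_unit[OF assms] fst_conv snd_conv)
  also have "\<dots> = (\<Sum>u\<in>TB m r \<times> TB m r. if u = w then X w else 0)"
    by (intro sum.cong) (auto simp: scoef_unit_right prod_eq_iff)
  finally show ?thesis by simp
qed

lemma ttmul_unit_left:
  assumes "(0,0) \<in> TB m r"
  shows "ttmul m r lam (tens (tbasis (0,0)) (tbasis (0,0))) X w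
        = (if w \<in> TB m r \<times> TB m r then X w else 0)"
proof -
  have "ttmul m r lam (tens (tbasis (0,0)) (tbasis (0,0))) X w = (\<Sum>v\<in>TB m r \<times> TB m r.
      \<Sum>u\<in>TB m r \<times> TB m r. tens (tbasis (0,0)) (tbasis (0,0)) u *
        (X v * scoef m r lam (fst u) (fst v) (fst w) * scoef m r lam (snd u) (snd v) (snd w)))"
    unfolding ttmul_def by (subst sum.swap) (simp add: ac_simps)
  also have "\<dots> = (\<Sum>v\<in>TB m r \<times> TB m r.
      X v * scoef m r lam (0,0) (fst v) (fst w) * scoef m r lam (0,0) (snd v) (snd w))"
    by (simp only: sum_tens_unit[OF assms] fst_conv snd_conv)
  also have "\<dots> = (\<Sum>v\<in>TB m r \<times> TB m r. if v = w then X w else 0)"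
    by (intro sum.cong) (auto simp: scoef_unit_left prod_eq_iff)
  finally show ?thesis by simp
qed

lemma tdelta_x:
  assumes "0 < m" "1 < r"
  shows "tdelta m r lam (tbasis (0,1)) w = (if w \<in> TB m r \<times> TB m r
           then tens (tbasis (0,0)) (tbasis (0,1)) w + tens (tbasis (0,1)) (tbasis (1,0)) w else 0)"
proof -
  have T: "(0,0) \<in> TB m r" "(0,1) \<in> TB m r" using assms by (auto simp: TB_def)
  have "tdelta m r lam (tbasis (0,1)) w = (\<Sum>u\<in>TB m r. if u = (0,1) then
      ttmul m r lam
        (ttpow m r lam (tens (tbasis (1,0)) (tbasis (1,0))) (fst u))
        (ttpow m r lam (\<lambda>z. tens (tbasis (0,0)) (tbasis (0,1)) z + tens (tbasis (0,1)) (tbasis (1,0)) z) (snd u))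
        w else 0)"
    unfolding tdelta_def by (intro sum.cong) (auto simp: tbasis_def)
  also have "\<dots> = ttmul m r lam (tens (tbasis (0,0)) (tbasis (0,0)))
        (ttmul m r lam (\<lambda>z. tens (tbasis (0,0)) (tbasis (0,1)) z + tens (tbasis (0,1)) (tbasis (1,0)) z)
           (tens (tbasis (0,0)) (tbasis (0,0)))) w"
    using T by (simp add: ttpow_def One_nat_def)
  finally show ?thesis using T by (simp add: ttmul_unit_left ttmul_unit_right)
qed

lemma tmul_x_x_eq_0: "tmul m 2 (lam :: 'k::field) (tbasis (0,1)) (tbasis (0,1)) = 0"
proof -
  have "tbasis (0,1) u * tbasis (0,1) v * scoef m 2 lam u v w = 0" for u v w
    by (auto simp: tbasis_def scoef_def)
  then show ?thesis by (simp only: tmul_def sum.neutral_const zero_fun_def)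
qed

section \<open>The path algebra and T-module algebras\<close>

lemma vtx_apply: "vtx i p = (if p = Triv i then 1 else 0)"
  by (simp add: vtx_def sing_def)

lemma arrow_apply: "arrow a p = (if p = Arrs [a] then 1 else 0)"
  by (simp add: arrow_def sing_def)

lemma finite_support: "f \<in> Aset n \<Longrightarrow> finite {q. f q \<noteq> 0}"
  by (simp add: Aset_def)

lemma vtx_in_Aset:
  assumes "i < n"
  shows "vtx i \<in> Aset n"
proof -
  have "{q. vtx i q \<noteq> 0} = {Triv i}" by (auto simp: vtx_apply)
  then show ?thesis using assms by (auto simp: Aset_def vtx_apply)
qed

lemma arrow_in_Aset:
  assumes "aidx a < n"
  shows "arrow a \<in> Aset n"
proof -
  have "{q. arrow a q \<noteq> 0} = {Arrs [a]}" by (auto simp: arrow_apply)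
  then show ?thesis using assms by (auto simp: Aset_def arrow_apply)
qed

lemma scale_in_Aset: "f \<in> Aset n \<Longrightarrow> (\<lambda>p. c * f p) \<in> Aset n"
  unfolding Aset_def by (auto elim: finite_subset[rotated])

lemma scale_add_in_Aset:
  assumes "f \<in> Aset n" "h \<in> Aset n"
  shows "(\<lambda>p. c * f p + h p) \<in> Aset n"
proof -
  have "{q. c * f q + h q \<noteq> 0} \<subseteq> {q. f q \<noteq> 0} \<union> {q. h q \<noteq> 0}" by auto
  then show ?thesis using assms unfolding Aset_def by (auto elim: finite_subset)
qed

lemma pcat_Triv_left: "pcat n (Triv v) q = (if v = psrc n q then Some q else None)"
  by (simp add: pcat_def)

lemma pcat_Triv_right: "pcat n p (Triv v) = (if ptgt n p = v then Some p else None)"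
  by (cases p) (auto simp: pcat_def)

lemma amul_triv_supported_left:
  assumes fin: "finite {q. f q \<noteq> 0}" "finite {q. h q \<noteq> 0}"
    and triv: "\<And>q. f q \<noteq> 0 \<Longrightarrow> \<exists>v. q = Triv v"
  shows "amul n f h p = f (Triv (psrc n p)) * h p"
proof -
  have inner: "(\<Sum>p2\<in>{q. h q \<noteq> 0}. if pcat n p1 p2 = Some p then f p1 * h p2 else 0)
      = (if p1 = Triv (psrc n p) then f p1 * h p else 0)" if "f p1 \<noteq> 0" for p1
  proof -
    obtain v where v: "p1 = Triv v" using triv \<open>f p1 \<noteq> 0\<close> by blast
    have "(\<Sum>p2\<in>{q. h q \<noteq> 0}. if pcat n p1 p2 = Some p then f p1 * h p2 else 0)
        = (\<Sum>p2\<in>{q. h q \<noteq> 0}. if p2 = p then (if v = psrc n p then f p1 * h p else 0) else 0)"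
      by (intro sum.cong) (auto simp: v pcat_Triv_left)
    then show ?thesis using fin by (auto simp: v)
  qed
  have "amul n f h p = (\<Sum>p1\<in>{q. f q \<noteq> 0}. if p1 = Triv (psrc n p) then f p1 * h p else 0)"
    unfolding amul_def using inner by (intro sum.cong) auto
  then show ?thesis using fin by auto
qed

lemma amul_triv_supported_right:
  assumes fin: "finite {q. f q \<noteq> 0}" "finite {q. h q \<noteq> 0}"
    and triv: "\<And>q. h q \<noteq> 0 \<Longrightarrow> \<exists>v. q = Triv v"
  shows "amul n f h p = f p * h (Triv (ptgt n p))"
proof -
  have inner: "(\<Sum>p2\<in>{q. h q \<noteq> 0}. if pcat n p1 p2 = Some p then f p1 * h p2 else 0)
      = (if p1 = p then f p * h (Triv (ptgt n p)) else 0)" for p1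
  proof -
    have "(\<Sum>p2\<in>{q. h q \<noteq> 0}. if pcat n p1 p2 = Some p then f p1 * h p2 else 0)
        = (\<Sum>p2\<in>{q. h q \<noteq> 0}. if p2 = Triv (ptgt n p) then (if p1 = p then f p * h p2 else 0) else 0)"
      by (intro sum.cong) (auto simp: pcat_Triv_right split: if_splits dest!: triv)
    then show ?thesis using fin by auto
  qed
  have "amul n f h p = (\<Sum>p1\<in>{q. f q \<noteq> 0}. if p1 = p then f p * h (Triv (ptgt n p)) else 0)"
    unfolding amul_def using inner by (intro sum.cong) auto
  then show ?thesis using fin by auto
qed

lemma finite_vtx_support: "finite {q. vtx v q \<noteq> 0}"
  by (simp add: vtx_apply)

lemma amul_vtx_left:
  "f \<in> Aset n \<Longrightarrow> amul n (vtx v) f p = (if psrc n p = v then f p else 0)"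
  by (subst amul_triv_supported_left) (auto simp: Aset_def finite_vtx_support vtx_apply split: if_splits)

lemma amul_vtx_right:
  "f \<in> Aset n \<Longrightarrow> amul n f (vtx v) p = (if ptgt n p = v then f p else 0)"
  by (subst amul_triv_supported_right) (auto simp: Aset_def finite_vtx_support vtx_apply split: if_splits)

lemma path_length_le_1_cases:
  assumes "valid_path n p" "plen p \<le> 1"
  obtains v where "p = Triv v" | c where "aidx c < n" "p = Arrs [c]"
proof (cases p)
  case (Arrs l)
  with assms obtain c where "l = [c]" by (cases l) auto
  with assms Arrs that(2) show thesis by simp
qed (use that(1) in blast)

locale taft_module_algebra =
  fixes n m r :: nat and lam :: "'k::field"
    and \<rho> :: "(nat \<times> nat \<Rightarrow> 'k) \<Rightarrow> (path \<Rightarrow> 'k) \<Rightarrow> (path \<Rightarrow> 'k)"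
  assumes r_gt_1: "1 < r" and m_pos: "0 < m" and r_dvd_m: "r dvd m"
    and module_algebra: "module_algebra n m r lam \<rho>"
begin

lemma TB_generators: "(0,0) \<in> TB m r" "(0,1) \<in> TB m r" "(1,0) \<in> TB m r"
  using r_gt_1 dvd_imp_le[OF r_dvd_m m_pos] by (auto simp: TB_def)

lemma tbasis_in_Tset: "u \<in> TB m r \<Longrightarrow> tbasis u \<in> Tset m r"
  by (auto simp: Tset_def tbasis_def)

lemma act_in_Aset: "t \<in> Tset m r \<Longrightarrow> f \<in> Aset n \<Longrightarrow> \<rho> t f \<in> Aset n"
  using module_algebra unfolding module_algebra_def by (elim conjE) blast

lemma act_add: "t \<in> Tset m r \<Longrightarrow> f \<in> Aset n \<Longrightarrow> h \<in> Aset n \<Longrightarrow> \<rho> t (f + h) = \<rho> t f + \<rho> t h"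
  using module_algebra unfolding module_algebra_def by (elim conjE) blast

lemma act_scale: "t \<in> Tset m r \<Longrightarrow> f \<in> Aset n \<Longrightarrow> \<rho> t (\<lambda>p. c * f p) = (\<lambda>p. c * \<rho> t f p)"
  using module_algebra unfolding module_algebra_def by (elim conjE) blast

lemma scale_act: "t \<in> Tset m r \<Longrightarrow> f \<in> Aset n \<Longrightarrow> \<rho> (\<lambda>w. c * t w) f = (\<lambda>p. c * \<rho> t f p)"
  using module_algebra unfolding module_algebra_def by (elim conjE) blast

lemma act_tmul: "t \<in> Tset m r \<Longrightarrow> s \<in> Tset m r \<Longrightarrow> f \<in> Aset n \<Longrightarrow> \<rho> (tmul m r lam t s) f = \<rho> t (\<rho> s f)"
  using module_algebra unfolding module_algebra_def by (elim conjE) blast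

lemma act_unit: "f \<in> Aset n \<Longrightarrow> \<rho> (tbasis (0,0)) f = f"
  using module_algebra unfolding module_algebra_def by (elim conjE) blast

lemma act_amul: "h \<in> Tset m r \<Longrightarrow> f \<in> Aset n \<Longrightarrow> f' \<in> Aset n \<Longrightarrow>
    \<rho> h (amul n f f') = (\<lambda>p. \<Sum>u\<in>TB m r \<times> TB m r.
       tdelta m r lam h u * amul n (\<rho> (tbasis (fst u)) f) (\<rho> (tbasis (snd u)) f') p)"
  using module_algebra unfolding module_algebra_def by (elim conjE) simp

lemma act_scale_add:
  assumes "t \<in> Tset m r" "f \<in> Aset n" "h \<in> Aset n"
  shows "\<rho> t (\<lambda>p. c * f p + h p) = (\<lambda>p. c * \<rho> t f p + \<rho> t h p)"
proof -
  have "\<rho> t (\<lambda>p. c * f p + h p) = \<rho> t ((\<lambda>p. c * f p) + h)" by (simp only: plus_fun_def)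
  also have "\<dots> = \<rho> t (\<lambda>p. c * f p) + \<rho> t h" using assms by (simp add: act_add scale_in_Aset)
  finally show ?thesis using assms by (simp add: act_scale plus_fun_def)
qed

lemma x_act_in_Aset: "f \<in> Aset n \<Longrightarrow> xact \<rho> f \<in> Aset n"
  and g_act_in_Aset: "f \<in> Aset n \<Longrightarrow> gact \<rho> f \<in> Aset n"
  using act_in_Aset tbasis_in_Tset TB_generators by blast+

lemma x_act_amul:
  assumes "f \<in> Aset n" "h \<in> Aset n"
  shows "xact \<rho> (amul n f h) p = amul n f (xact \<rho> h) p + amul n (xact \<rho> f) (gact \<rho> h) p"
proof -
  let ?summand = "\<lambda>u. amul n (\<rho> (tbasis (fst u)) f) (\<rho> (tbasis (snd u)) h) p"
  have "xact \<rho> (amul n f h) p = (\<Sum>u\<in>TB m r \<times> TB m r. tdelta m r lam (tbasis (0,1)) u * ?summand u)"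
    using act_amul[OF tbasis_in_Tset[OF TB_generators(2)] assms] by simp
  also have "\<dots> = (\<Sum>u\<in>TB m r \<times> TB m r.
      (if u = ((0,0),(0,1)) then ?summand u else 0) + (if u = ((0,1),(1,0)) then ?summand u else 0))"
  proof (intro sum.cong refl)
    fix u assume "u \<in> TB m r \<times> TB m r"
    then have "tdelta m r lam (tbasis (0,1)) u
        = tens (tbasis (0,0)) (tbasis (0,1)) u + tens (tbasis (0,1)) (tbasis (1,0)) u"
      using tdelta_x[OF m_pos r_gt_1, of lam u] by simp
    then show "tdelta m r lam (tbasis (0,1)) u * ?summand u
        = (if u = ((0,0),(0,1)) then ?summand u else 0) + (if u = ((0,1),(1,0)) then ?summand u else 0)"
      by (simp only: tens_tbasis distrib_right) simp
  qed
  also have "\<dots> = amul n f (xact \<rho> h) p + amul n (xact \<rho> f) (gact \<rho> h) p"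
    using TB_generators by (simp add: sum.distrib act_unit assms)
  finally show ?thesis .
qed

lemma x_x_act_eq_0:
  assumes "r = 2" "f \<in> Aset n"
  shows "xact \<rho> (xact \<rho> f) = 0"
proof -
  have x: "tbasis (0,1) \<in> Tset m r" using tbasis_in_Tset TB_generators by blast
  have "xact \<rho> (xact \<rho> f) = \<rho> (tmul m r lam (tbasis (0,1)) (tbasis (0,1))) f"
    using act_tmul[OF x x assms(2)] by simp
  also have "\<dots> = \<rho> (\<lambda>w. 0 * tbasis (0,1) w) f"
    unfolding assms(1) tmul_x_x_eq_0 by (simp add: zero_fun_def)
  finally show ?thesis using scale_act[OF x assms(2), of 0] by (simp add: zero_fun_def)
qed

end

section \<open>Arrows of the double cyclic quiver\<close>

lemma Suc_mod_cong: "[int (Suc x mod n) = int x + 1] (mod int n)"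
  by (simp add: cong_def zmod_int ac_simps)

lemma rotate_cong: "[int ((x + d) mod n) = int x + int d] (mod int n)"
  by (simp add: cong_def zmod_int)

lemma shift_mod_inj:
  fixes x y n d :: nat
  assumes "x < n" "y < n" "(x + d) mod n = (y + d) mod n"
  shows "x = y"
proof -
  have "[x + d = y + d] (mod n)" using assms(3) by (simp only: cong_def)
  then have "[x = y] (mod n)" by (simp only: cong_add_rcancel_nat)
  then show ?thesis using assms(1,2) by (rule cong_less_modulus_unique_nat)
qed

lemma endpoint_lt: "aidx c < n \<Longrightarrow> asrc n c < n \<and> atgt n c < n"
  by (cases c) auto

lemma arrow_endpoints_cong:
  assumes "aidx c < n"
  obtains e :: int where "e \<in> {1, -1}" "[int (atgt n c) = int (asrc n c) + e] (mod int n)"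
proof (cases c)
  case (Ar i)
  then have "[int (atgt n c) = int (asrc n c) + 1] (mod int n)"
    by (simp add: Suc_mod_cong)
  then show ?thesis using that by blast
next
  case (As i)
  then have "[int (asrc n c) = int (atgt n c) + 1] (mod int n)"
    by (simp add: Suc_mod_cong)
  moreover have "int (atgt n c) - (int (asrc n c) + -1) = - (int (asrc n c) - (int (atgt n c) + 1))"
    by simp
  ultimately have "[int (atgt n c) = int (asrc n c) + -1] (mod int n)"
    by (simp only: cong_iff_dvd_diff dvd_minus_iff)
  then show ?thesis using that by blast
qed

lemma asrc_ne_atgt:
  assumes "2 \<le> n" "aidx c < n"
  shows "asrc n c \<noteq> atgt n c"
proof
  assume loop: "asrc n c = atgt n c"
  obtain e :: int where "e \<in> {1, -1}" "[int (atgt n c) = int (asrc n c) + e] (mod int n)"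
    using arrow_endpoints_cong assms(2) by blast
  then have "int n dvd e" using loop by (simp add: cong_iff_dvd_diff)
  then have "int n \<le> 1" using \<open>e \<in> {1, -1}\<close> by (auto dest: zdvd_imp_le)
  then show False using assms(1) by simp
qed

lemma arrow_eq_if_same_endpoints:
  assumes "3 \<le> n" "aidx b < n" "aidx c < n"
    and "asrc n b = asrc n c" "atgt n b = atgt n c"
  shows "b = c"
proof -
  have no_2_cycle: False if "j = Suc i mod n" "i = Suc j mod n" for i j
  proof -
    have "[int j = int i + 1] (mod int n)" "[int i = int j + 1] (mod int n)"
      using Suc_mod_cong[of i n] Suc_mod_cong[of j n] by (simp_all only: that[symmetric])
    then have "int n dvd (int j - (int i + 1)) + (int i - (int j + 1))"
      by (intro dvd_add) (simp_all add: cong_iff_dvd_diff)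
    then have "int n dvd 2" by simp
    then show False using assms(1) by (auto dest: zdvd_imp_le)
  qed
  show ?thesis
  proof (cases b; cases c)
    fix i j assume "b = Ar i" "c = As j"
    then show ?thesis using assms(4,5) no_2_cycle[of j i] by (metis asrc.simps atgt.simps)
  next
    fix i j assume "b = As i" "c = Ar j"
    then show ?thesis using assms(4,5) no_2_cycle[of i j] by (metis asrc.simps atgt.simps)
  qed (use assms(4,5) in auto)
qed

lemma cong_offsets_rotate:
  fixes x y s e e' d n :: int
  assumes "[x = s + e] (mod n)" "[y = s + e'] (mod n)" "[y = x + d] (mod n)"
  shows "[e + d = e'] (mod n)"
proof -
  have "n dvd (y - (s + e')) - (x - (s + e)) - (y - (x + d))"
    using assms unfolding cong_iff_dvd_diff by (intro dvd_diff[of n "_ - _"])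
  moreover have "(y - (s + e')) - (x - (s + e)) - (y - (x + d)) = e + d - e'" by simp
  ultimately show ?thesis by (simp add: cong_iff_dvd_diff add_diff_eq)
qed

lemma rotations_of_neighbours:
  fixes n d e1 e2 e3 :: int
  assumes n: "3 \<le> n" and d: "0 < d" "d < n"
    and e: "e1 \<in> {1, -1}" "e2 \<in> {1, -1}" "e3 \<in> {1, -1}"
    and step1: "[e1 + d = e2] (mod n)" and step2: "[e2 + d = e3] (mod n)"
  shows "n = 4 \<and> d = 2"
proof -
  have flip: "e' \<noteq> e" if "[e + d = e'] (mod n)" for e e'
  proof
    assume "e' = e"
    with that have "n dvd d" by (simp add: cong_iff_dvd_diff)
    then show False using d by (auto dest: zdvd_imp_le)
  qed
  have "e2 = - e1" "e3 = - e2" using flip[OF step1] flip[OF step2] e by auto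
  then have "n dvd d + 2" "n dvd d - 2"
    using step1 step2 e by (auto simp: cong_iff_dvd_diff algebra_simps)
  then have "n dvd (d + 2) - (d - 2)" by (rule dvd_diff)
  then have "n \<le> 4" by (auto dest: zdvd_imp_le)
  with n have "n = 3 \<or> n = 4" by auto
  with \<open>n dvd (d + 2) - (d - 2)\<close> have "n = 4" by auto
  with \<open>n dvd d - 2\<close> d show ?thesis by presburger
qed

section \<open>Rotation actions and the quiver-Taft map\<close>

lemma funpow_eq_0_beyond:
  fixes f :: "'a::zero \<Rightarrow> 'a"
  assumes "f 0 = 0" "(f ^^ k) x = 0" "k \<le> j"
  shows "(f ^^ j) x = 0"
proof -
  have "(f ^^ (i + k)) x = 0" for i
    using assms(1,2) by (induction i) simp_all
  moreover have "j = (j - k) + k" using assms(3) by simp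
  ultimately show ?thesis by metis
qed

definition rot_arr :: "nat \<Rightarrow> nat \<Rightarrow> arr \<Rightarrow> arr" where
  "rot_arr n d a = (case a of Ar i \<Rightarrow> Ar ((i + d) mod n) | As i \<Rightarrow> As ((i + d) mod n))"

definition rot_coeff :: "(nat \<Rightarrow> 'k) \<Rightarrow> (nat \<Rightarrow> 'k) \<Rightarrow> arr \<Rightarrow> 'k" where
  "rot_coeff \<mu> \<mu>s a = (case a of Ar i \<Rightarrow> \<mu> i | As i \<Rightarrow> \<mu>s i)"

lemma rot_arr_endpoints:
  assumes "aidx a < n"
  shows "aidx (rot_arr n d a) < n" "asrc n (rot_arr n d a) = (asrc n a + d) mod n"
    "atgt n (rot_arr n d a) = (atgt n a + d) mod n"
  using assms by (cases a; simp add: rot_arr_def mod_Suc_eq mod_add_left_eq)+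

lemma quiver_taft_eq_0:
  "(\<And>c. aidx c < n \<Longrightarrow> f (Arrs [c]) = 0) \<Longrightarrow> quiver_taft n lam \<gamma> \<rho> f = 0"
  by (simp add: quiver_taft_def fun_eq_iff)

lemma quiver_taft_scaled_arrow:
  assumes "aidx b < n"
  shows "quiver_taft n lam \<gamma> \<rho> (\<lambda>p. k * arrow b p) = (\<lambda>p. k * sigma_arr n lam \<gamma> \<rho> b p)"
proof
  fix p
  have "quiver_taft n lam \<gamma> \<rho> (\<lambda>p. k * arrow b p) p
      = (\<Sum>i<n. if b = Ar i \<or> b = As i then k * sigma_arr n lam \<gamma> \<rho> b p else 0)"
    unfolding quiver_taft_def by (intro sum.cong) (auto simp: arrow_apply)
  also have "\<dots> = (\<Sum>i<n. if i = aidx b then k * sigma_arr n lam \<gamma> \<rho> b p else 0)"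
    by (cases b) auto
  finally show "quiver_taft n lam \<gamma> \<rho> (\<lambda>p. k * arrow b p) p = k * sigma_arr n lam \<gamma> \<rho> b p"
    using assms by simp
qed

locale rotation_action = taft_module_algebra +
  fixes d :: nat and \<mu> \<mu>s \<gamma> :: "nat \<Rightarrow> 'k::field"
  assumes n_ge_3: "3 \<le> n" and d_bounds: "0 < d" "d \<le> n - 1"
    and linear: "linear_action n \<rho>"
    and rot_e: "\<forall>i<n. gact \<rho> (vtx i) = vtx ((i + d) mod n)"
    and rot_a: "\<forall>i<n. gact \<rho> (arrow (Ar i)) = (\<lambda>p. \<mu> i * arrow (Ar ((i + d) mod n)) p)"
    and rot_as: "\<forall>i<n. gact \<rho> (arrow (As i)) = (\<lambda>p. \<mu>s i * arrow (As ((i + d) mod n)) p)"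
    and gam: "\<forall>i<n. xact \<rho> (vtx i) = (\<lambda>p. \<gamma> i * vtx i p - \<gamma> i * inverse lam * vtx ((i + d) mod n) p)"
begin

abbreviation "\<sigma> \<equiv> quiver_taft n lam \<gamma> \<rho>"
abbreviation "\<sigma>_arr \<equiv> sigma_arr n lam \<gamma> \<rho>"

lemma g_act_arrow:
  "aidx a < n \<Longrightarrow> gact \<rho> (arrow a) = (\<lambda>p. rot_coeff \<mu> \<mu>s a * arrow (rot_arr n d a) p)"
  using rot_a rot_as by (cases a) (auto simp: rot_coeff_def rot_arr_def)

lemma sigma_arr_apply:
  assumes "aidx a < n"
  shows "\<sigma>_arr a p = xact \<rho> (arrow a) p - \<gamma> (atgt n a) * arrow a p
     + \<gamma> (asrc n a) * inverse lam * rot_coeff \<mu> \<mu>s a * arrow (rot_arr n d a) p"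
  by (simp add: sigma_arr_def g_act_arrow[OF assms] mult.assoc)

lemma sigma_arr_Triv: "aidx a < n \<Longrightarrow> \<sigma>_arr a (Triv v) = xact \<rho> (arrow a) (Triv v)"
  by (simp add: sigma_arr_apply arrow_apply)

(* From a = e_s a: away from s, x.a reduces to the term -gamma_s lam^-1 (g.a), which sigma(a)
   cancels. Dually for targets, from a = a e_t. *)
lemma sigma_arr_vanishes_off_source:
  assumes a: "aidx a < n" and p: "psrc n p \<noteq> asrc n a"
  shows "\<sigma>_arr a p = 0"
proof -
  let ?s = "asrc n a" and ?a' = "rot_arr n d a"
  have s: "?s < n" using endpoint_lt a by blast
  have triv: "\<exists>v. q = Triv v" if "xact \<rho> (vtx ?s) q \<noteq> 0" for q
    using that gam s by (auto simp: vtx_apply split: if_splits)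
  have "amul n (vtx ?s) (arrow a) = (arrow a :: path \<Rightarrow> 'k)"
    by (auto simp: fun_eq_iff amul_vtx_left arrow_in_Aset a arrow_apply)
  then have "xact \<rho> (arrow a) p = xact \<rho> (amul n (vtx ?s) (arrow a)) p" by simp
  also have "\<dots> = amul n (vtx ?s) (xact \<rho> (arrow a)) p + amul n (xact \<rho> (vtx ?s)) (gact \<rho> (arrow a)) p"
    by (intro x_act_amul vtx_in_Aset arrow_in_Aset s a)
  also have "\<dots> = xact \<rho> (vtx ?s) (Triv (psrc n p)) * gact \<rho> (arrow a) p"
  proof -
    have "amul n (xact \<rho> (vtx ?s)) (gact \<rho> (arrow a)) p = xact \<rho> (vtx ?s) (Triv (psrc n p)) * gact \<rho> (arrow a) p"
      by (intro amul_triv_supported_left triv finite_support[of _ n] x_act_in_Aset g_act_in_Aset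
          vtx_in_Aset arrow_in_Aset s a)
    then show ?thesis using p by (simp add: amul_vtx_left x_act_in_Aset arrow_in_Aset a)
  qed
  also have "\<dots> = - (\<gamma> ?s * inverse lam * rot_coeff \<mu> \<mu>s a * arrow ?a' p)"
    using p gam s rot_arr_endpoints[OF a] by (auto simp: g_act_arrow a vtx_apply arrow_apply)
  finally show ?thesis using p by (auto simp: sigma_arr_apply a arrow_apply)
qed

lemma sigma_arr_vanishes_off_target:
  assumes a: "aidx a < n" and p: "ptgt n p \<noteq> (atgt n a + d) mod n"
  shows "\<sigma>_arr a p = 0"
proof -
  let ?t = "atgt n a"
  have t: "?t < n" using endpoint_lt a by blast
  have triv: "\<exists>v. q = Triv v" if "xact \<rho> (vtx ?t) q \<noteq> 0" for q
    using that gam t by (auto simp: vtx_apply split: if_splits)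
  have "amul n (arrow a) (vtx ?t) = (arrow a :: path \<Rightarrow> 'k)"
    by (auto simp: fun_eq_iff amul_vtx_right arrow_in_Aset a arrow_apply)
  then have "xact \<rho> (arrow a) p = xact \<rho> (amul n (arrow a) (vtx ?t)) p" by simp
  also have "\<dots> = amul n (arrow a) (xact \<rho> (vtx ?t)) p + amul n (xact \<rho> (arrow a)) (gact \<rho> (vtx ?t)) p"
    by (intro x_act_amul vtx_in_Aset arrow_in_Aset t a)
  also have "\<dots> = arrow a p * xact \<rho> (vtx ?t) (Triv (ptgt n p))"
  proof -
    have "amul n (arrow a) (xact \<rho> (vtx ?t)) p = arrow a p * xact \<rho> (vtx ?t) (Triv (ptgt n p))"
      by (intro amul_triv_supported_right triv finite_support[of _ n] x_act_in_Aset
          vtx_in_Aset arrow_in_Aset t a)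
    then show ?thesis using p rot_e t by (simp add: amul_vtx_right x_act_in_Aset arrow_in_Aset a)
  qed
  also have "\<dots> = \<gamma> ?t * arrow a p"
    using p gam t by (auto simp: vtx_apply arrow_apply)
  finally show ?thesis using p rot_arr_endpoints[OF a] by (auto simp: sigma_arr_apply a arrow_apply)
qed

lemma sigma_arr_support:
  assumes a: "aidx a < n" and nz: "\<sigma>_arr a p \<noteq> 0"
  shows "psrc n p = asrc n a" "ptgt n p = (atgt n a + d) mod n" "valid_path n p" "plen p \<le> 1"
proof -
  show "psrc n p = asrc n a" using sigma_arr_vanishes_off_source[OF a] nz by blast
  show "ptgt n p = (atgt n a + d) mod n" using sigma_arr_vanishes_off_target[OF a] nz by blast
  have "valid_path n p \<and> plen p \<le> 1"
  proof (cases "xact \<rho> (arrow a) p = 0")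
    case True
    with nz have "p = Arrs [a] \<or> p = Arrs [rot_arr n d a]"
      by (auto simp: sigma_arr_apply a arrow_apply split: if_splits)
    then show ?thesis using a rot_arr_endpoints(1)[OF a] by auto
  next
    case False
    then have "valid_path n p" using x_act_in_Aset[OF arrow_in_Aset[OF a]] by (auto simp: Aset_def)
    moreover have "plen p \<le> 1" using linear a False unfolding linear_action_def by blast
    ultimately show ?thesis ..
  qed
  then show "valid_path n p" "plen p \<le> 1" by auto
qed

lemma sigma_arr_arrow_term:
  assumes a: "aidx a < n" and b: "aidx b < n" and nz: "\<sigma>_arr a (Arrs [b]) \<noteq> 0"
  shows "asrc n b = asrc n a" "atgt n b = (atgt n a + d) mod n"
    and "\<sigma>_arr a = (\<lambda>p. \<sigma>_arr a (Arrs [b]) * arrow b p)"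
proof -
  show b_src: "asrc n b = asrc n a" and b_tgt: "atgt n b = (atgt n a + d) mod n"
    using sigma_arr_support[OF a nz] by simp_all
  have "p = Arrs [b]" if "\<sigma>_arr a p \<noteq> 0" for p
  proof (cases rule: path_length_le_1_cases[OF sigma_arr_support(3,4)[OF a that]])
    case (1 v)
    then have "asrc n b = atgt n b" using sigma_arr_support[OF a that] b_src b_tgt by simp
    then show ?thesis using asrc_ne_atgt[OF _ b] n_ge_3 by simp
  next
    case (2 c)
    then have "c = b"
      using sigma_arr_support[OF a that] b_src b_tgt arrow_eq_if_same_endpoints[OF n_ge_3 2(1) b]
      by simp
    then show ?thesis using 2 by simp
  qed
  then show "\<sigma>_arr a = (\<lambda>p. \<sigma>_arr a (Arrs [b]) * arrow b p)"
    by (auto simp: fun_eq_iff arrow_apply)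
qed

lemma sigma_arr_no_second_arrow_term:
  assumes nd: "n \<noteq> 4 \<or> d \<noteq> 2" and a: "aidx a < n" and b: "aidx b < n" and c: "aidx c < n"
    and ab: "\<sigma>_arr a (Arrs [b]) \<noteq> 0"
  shows "\<sigma>_arr b (Arrs [c]) = 0"
proof (rule ccontr)
  assume bc: "\<sigma>_arr b (Arrs [c]) \<noteq> 0"
  note ab_ends = sigma_arr_arrow_term(1,2)[OF a b ab]
    and bc_ends = sigma_arr_arrow_term(1,2)[OF b c bc]
  obtain e1 :: int where "e1 \<in> {1, -1}" and e1: "[int (atgt n a) = int (asrc n a) + e1] (mod int n)"
    using arrow_endpoints_cong[OF a] by blast
  obtain e2 :: int where "e2 \<in> {1, -1}" and e2: "[int (atgt n b) = int (asrc n a) + e2] (mod int n)"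
    using arrow_endpoints_cong[OF b, unfolded ab_ends(1)] by blast
  obtain e3 :: int where "e3 \<in> {1, -1}" and e3: "[int (atgt n c) = int (asrc n a) + e3] (mod int n)"
    using arrow_endpoints_cong[OF c, unfolded bc_ends(1) ab_ends(1)] by blast
  have "[e1 + int d = e2] (mod int n)"
    using e1 e2 rotate_cong[of "atgt n a" d n, folded ab_ends(2)] by (rule cong_offsets_rotate)
  moreover have "[e2 + int d = e3] (mod int n)"
    using e2 e3 rotate_cong[of "atgt n b" d n, folded bc_ends(2)] by (rule cong_offsets_rotate)
  ultimately have "int n = 4 \<and> int d = 2"
    using rotations_of_neighbours[of "int n" "int d" e1 e2 e3] \<open>e1 \<in> {1, -1}\<close> \<open>e2 \<in> {1, -1}\<close>
      \<open>e3 \<in> {1, -1}\<close> n_ge_3 d_bounds by simp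
  with nd show False by simp
qed

lemma sigma_arr_no_second_Triv_term:
  assumes r2: "r = 2" and a: "aidx a < n" and b: "aidx b < n" and ab: "\<sigma>_arr a (Arrs [b]) \<noteq> 0"
  shows "\<sigma>_arr b (Triv v) = 0"
proof -
  define k where "k = \<sigma>_arr a (Arrs [b])"
  define c where "c = - (\<gamma> (asrc n a) * inverse lam * rot_coeff \<mu> \<mu>s a)"
  let ?a' = "rot_arr n d a"
  have a': "aidx ?a' < n" using rot_arr_endpoints(1)[OF a] .
  have x: "tbasis (0,1) \<in> Tset m r" using tbasis_in_Tset TB_generators by blast
  have "xact \<rho> (arrow a) = (\<lambda>p. k * arrow b p + (\<gamma> (atgt n a) * arrow a p + c * arrow ?a' p))"
    using sigma_arr_arrow_term(3)[OF a b ab, folded k_def]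
    by (auto simp: fun_eq_iff sigma_arr_apply[OF a] c_def algebra_simps dest!: fun_cong)
  then have "0 = xact \<rho> (\<lambda>p. k * arrow b p + (\<gamma> (atgt n a) * arrow a p + c * arrow ?a' p))"
    using x_x_act_eq_0[OF r2 arrow_in_Aset[OF a]] by simp
  also have "\<dots> = (\<lambda>p. k * xact \<rho> (arrow b) p + (\<gamma> (atgt n a) * xact \<rho> (arrow a) p + c * xact \<rho> (arrow ?a') p))"
    using a a' b by (simp add: act_scale_add[OF x] act_scale[OF x] scale_add_in_Aset scale_in_Aset arrow_in_Aset)
  finally have "k * \<sigma>_arr b (Triv v) + (\<gamma> (atgt n a) * \<sigma>_arr a (Triv v) + c * \<sigma>_arr ?a' (Triv v)) = 0"
    using a a' b by (simp add: sigma_arr_Triv fun_eq_iff)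
  moreover have "\<sigma>_arr a (Triv v) = 0"
    using fun_cong[OF sigma_arr_arrow_term(3)[OF a b ab], of "Triv v"] by (simp add: arrow_apply)
  moreover have "\<sigma>_arr ?a' (Triv v) = 0"
  proof (rule ccontr)
    assume "\<sigma>_arr ?a' (Triv v) \<noteq> 0"
    from sigma_arr_support(1,2)[OF a' this] rot_arr_endpoints[OF a]
    have "(asrc n a + d) mod n = ((atgt n a + d) mod n + d) mod n" by simp
    moreover have "(atgt n a + d) mod n < n" using n_ge_3 by simp
    ultimately have "asrc n a = (atgt n a + d) mod n"
      using shift_mod_inj endpoint_lt[OF a] by blast
    then show False using sigma_arr_arrow_term(1,2)[OF a b ab] asrc_ne_atgt[OF _ b] n_ge_3 by simp
  qed
  ultimately show ?thesis using ab k_def by simp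
qed

lemma sigma_arr_second_eq_0:
  assumes r2: "r = 2" and nd: "n \<noteq> 4 \<or> d \<noteq> 2"
    and a: "aidx a < n" and b: "aidx b < n" and ab: "\<sigma>_arr a (Arrs [b]) \<noteq> 0"
  shows "\<sigma>_arr b = 0"
proof -
  have "\<sigma>_arr b p = 0" for p
  proof (rule ccontr)
    assume nz: "\<sigma>_arr b p \<noteq> 0"
    show False
    proof (cases rule: path_length_le_1_cases[OF sigma_arr_support(3,4)[OF b nz]])
      case (1 v)
      then show False using nz sigma_arr_no_second_Triv_term[OF r2 a b ab] by simp
    next
      case (2 c)
      then show False using nz sigma_arr_no_second_arrow_term[OF nd a b 2(1) ab] by simp
    qed
  qed
  then show ?thesis by (simp add: fun_eq_iff)
qed

lemma quiver_taft_arrow: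
  assumes "aidx a < n"
  shows "\<sigma> (arrow a) = \<sigma>_arr a"
proof -
  have "\<sigma> (\<lambda>p. 1 * arrow a p) = (\<lambda>p. 1 * \<sigma>_arr a p)"
    by (rule quiver_taft_scaled_arrow[OF assms])
  then show ?thesis by simp
qed

lemma quiver_taft_power_arrow_eq_0:
  assumes nd: "n \<noteq> 4 \<or> d \<noteq> 2" and a: "aidx a < n"
  shows "(\<sigma> ^^ r) (arrow a) = 0"
proof -
  have zero: "\<sigma> 0 = 0" by (rule quiver_taft_eq_0) simp
  show ?thesis
  proof (cases "\<exists>b. aidx b < n \<and> \<sigma>_arr a (Arrs [b]) \<noteq> 0")
    case False
    then have "\<sigma> (\<sigma> (arrow a)) = 0"
      unfolding quiver_taft_arrow[OF a] by (intro quiver_taft_eq_0) blast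
    then have "(\<sigma> ^^ 2) (arrow a) = 0" by (simp add: numeral_2_eq_2)
    from funpow_eq_0_beyond[OF zero this] r_gt_1 show ?thesis by simp
  next
    case True
    then obtain b where b: "aidx b < n" and ab: "\<sigma>_arr a (Arrs [b]) \<noteq> 0" by blast
    have "\<sigma> (\<sigma> (arrow a)) = (\<lambda>p. \<sigma>_arr a (Arrs [b]) * \<sigma>_arr b p)"
      unfolding quiver_taft_arrow[OF a] by (subst sigma_arr_arrow_term(3)[OF a b ab])
        (rule quiver_taft_scaled_arrow[OF b])
    then have square: "(\<sigma> ^^ 2) (arrow a) = (\<lambda>p. \<sigma>_arr a (Arrs [b]) * \<sigma>_arr b p)"
      by (simp add: numeral_2_eq_2)
    show ?thesis
    proof (cases "r = 2")
      case True
      then show ?thesis using square sigma_arr_second_eq_0[OF True nd a b ab] by (simp add: fun_eq_iff)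
    next
      case False
      have "\<sigma> ((\<sigma> ^^ 2) (arrow a)) = 0"
        unfolding square using sigma_arr_no_second_arrow_term[OF nd a b _ ab] by (intro quiver_taft_eq_0) simp
      then have "(\<sigma> ^^ 3) (arrow a) = 0" by (simp add: numeral_3_eq_3 numeral_2_eq_2)
      from funpow_eq_0_beyond[OF zero this] r_gt_1 False show ?thesis by simp
    qed
  qed
qed

end

theorem lemma3p4:
  fixes lam :: "'k::field" and n r m d :: nat and \<mu> \<mu>s \<gamma> :: "nat \<Rightarrow> 'k"
    and \<rho> :: "(nat \<times> nat \<Rightarrow> 'k) \<Rightarrow> (path \<Rightarrow> 'k) \<Rightarrow> (path \<Rightarrow> 'k)"
  assumes n3: "n \<ge> 3"
    and r1: "r > 1" and m0: "m > 0" and rm: "r dvd m"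
    and prim: "lam ^ r = 1" "\<forall>k. 0 < k \<and> k < r \<longrightarrow> lam ^ k \<noteq> 1"
    and charr: "(of_nat r :: 'k) \<noteq> 0"
    and modalg: "module_algebra n m r lam \<rho>"
    and lin: "linear_action n \<rho>"
    and inf: "inner_faithful n m r lam \<rho>"
    and d: "0 < d" "d \<le> n - 1"
    and mu: "\<forall>i<n. \<mu> i \<noteq> 0 \<and> \<mu>s i \<noteq> 0"
    and rot_e: "\<forall>i<n. gact \<rho> (vtx i) = vtx ((i + d) mod n)"
    and rot_a: "\<forall>i<n. gact \<rho> (arrow (Ar i)) = (\<lambda>p. \<mu> i * arrow (Ar ((i + d) mod n)) p)"
    and rot_as: "\<forall>i<n. gact \<rho> (arrow (As i)) = (\<lambda>p. \<mu>s i * arrow (As ((i + d) mod n)) p)"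
    and gam: "\<forall>i<n. xact \<rho> (vtx i) = (\<lambda>p. \<gamma> i * vtx i p - \<gamma> i * inverse lam * vtx ((i + d) mod n) p)"
    and nd: "n \<noteq> 4 \<or> d \<noteq> 2"
  shows "\<forall>a. aidx a < n \<longrightarrow> (quiver_taft n lam \<gamma> \<rho> ^^ r) (arrow a) = 0"
proof -
  interpret rotation_action n m r lam \<rho> d \<mu> \<mu>s \<gamma>
    by unfold_locales (use r1 m0 rm modalg n3 d lin rot_e rot_a rot_as gam in auto)
  show ?thesis using quiver_taft_power_arrow_eq_0[OF nd] by blast
qed

end
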